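(* Let $G$ be a finite simple graph, $P$ a pebble distribution, and $U$ a unit distribution of nonzero size on a vertex $u$, disjoint from $P$. If a vertex $v$ has cooperation excess at least $3$ and one of its neighbors is a cooperation vertex, then there is a vertex $w$ adjacent to $v$ with $M(w)\leq M(v)$.
   Context: A pebble distribution is a function $V(G)\to\mathbb{Z}_{\geq0}$; $(P+U)(v)=P(v)+U(v)$. A pebbling move removes two pebbles from a vertex and adds one to an adjacent vertex; a pebbling sequence is an executable sequence of moves, and $(P+U)_\sigma$ is the result of applying $\sigma$. A vertex $v$ is $k$-reachable under a distribution if some pebbling sequence yields at least $k$ pebbles on $v$; reachable means $1$-reachable. $\mathrm{reach}(P,v)$ is the largest such $k$; $\mathrm{exc}(P,v)=\mathrm{reach}(P,v)-1$ if $v$ is reachable, else $0$. A cooperation vertex is reachable under $P+U$ but under neither $P$ nor $U$. The cooperation excess of $v$ is $\mathrm{exc}(P+U,v)-\mathrm{exc}(P,v)-\mathrm{exc}(U,v)$. A vertex is utilized by a pebbling sequence if some move of it removes or adds a pebble at that vertex. $M(v)$ is the minimum, over pebbling sequences $\sigma$ from $P+U$ with $(P+U)_\sigma(v)\geq 2$, of the number of cooperation vertices utilized by $\sigma$ (counting $v$ if it is a cooperation vertex); $M(v)=\infty$ if $v$ is not $2$-reachable under $P+U$. *)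

theory Defs
  imports Main "HOL-Library.Extended_Nat"
begin

definition simple_graph :: "'a set \<Rightarrow> ('a \<Rightarrow> 'a \<Rightarrow> bool) \<Rightarrow> bool" where
  "simple_graph V E \<longleftrightarrow> finite V \<and> (\<forall>x y. E x y \<longrightarrow> x \<in> V \<and> y \<in> V)
     \<and> (\<forall>x y. E x y \<longrightarrow> E y x) \<and> (\<forall>x. \<not> E x x)"

definition distribution :: "'a set \<Rightarrow> ('a \<Rightarrow> nat) \<Rightarrow> bool" where
  "distribution V P \<longleftrightarrow> (\<forall>x. x \<notin> V \<longrightarrow> P x = 0)"

definition dsum :: "('a \<Rightarrow> nat) \<Rightarrow> ('a \<Rightarrow> nat) \<Rightarrow> ('a \<Rightarrow> nat)" where
  "dsum P U = (\<lambda>x. P x + U x)"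

definition pmove :: "('a \<Rightarrow> nat) \<Rightarrow> 'a \<Rightarrow> 'a \<Rightarrow> ('a \<Rightarrow> nat)" where
  "pmove P x y = (\<lambda>z. (if z = x then P z - 2 else P z) + (if z = y then 1 else 0))"

fun executable :: "('a \<Rightarrow> 'a \<Rightarrow> bool) \<Rightarrow> ('a \<Rightarrow> nat) \<Rightarrow> ('a \<times> 'a) list \<Rightarrow> bool" where
  "executable E P [] = True"
| "executable E P ((x, y) # \<sigma>) = (E x y \<and> P x \<ge> 2 \<and> executable E (pmove P x y) \<sigma>)"

fun apply_seq :: "('a \<Rightarrow> nat) \<Rightarrow> ('a \<times> 'a) list \<Rightarrow> ('a \<Rightarrow> nat)" where
  "apply_seq P [] = P"
| "apply_seq P ((x, y) # \<sigma>) = apply_seq (pmove P x y) \<sigma>"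

definition k_reachable :: "('a \<Rightarrow> 'a \<Rightarrow> bool) \<Rightarrow> ('a \<Rightarrow> nat) \<Rightarrow> nat \<Rightarrow> 'a \<Rightarrow> bool" where
  "k_reachable E P k v \<longleftrightarrow> (\<exists>\<sigma>. executable E P \<sigma> \<and> apply_seq P \<sigma> v \<ge> k)"

definition reachable :: "('a \<Rightarrow> 'a \<Rightarrow> bool) \<Rightarrow> ('a \<Rightarrow> nat) \<Rightarrow> 'a \<Rightarrow> bool" where
  "reachable E P v \<longleftrightarrow> k_reachable E P 1 v"

definition reach :: "('a \<Rightarrow> 'a \<Rightarrow> bool) \<Rightarrow> ('a \<Rightarrow> nat) \<Rightarrow> 'a \<Rightarrow> nat" where
  "reach E P v = Max {k. k_reachable E P k v}"

definition exc :: "('a \<Rightarrow> 'a \<Rightarrow> bool) \<Rightarrow> ('a \<Rightarrow> nat) \<Rightarrow> 'a \<Rightarrow> nat" where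
  "exc E P v = (if reachable E P v then reach E P v - 1 else 0)"

definition coop_vertex :: "('a \<Rightarrow> 'a \<Rightarrow> bool) \<Rightarrow> ('a \<Rightarrow> nat) \<Rightarrow> ('a \<Rightarrow> nat) \<Rightarrow> 'a \<Rightarrow> bool" where
  "coop_vertex E P U v \<longleftrightarrow> reachable E (dsum P U) v \<and> \<not> reachable E P v \<and> \<not> reachable E U v"

definition coop_excess :: "('a \<Rightarrow> 'a \<Rightarrow> bool) \<Rightarrow> ('a \<Rightarrow> nat) \<Rightarrow> ('a \<Rightarrow> nat) \<Rightarrow> 'a \<Rightarrow> int" where
  "coop_excess E P U v = int (exc E (dsum P U) v) - int (exc E P v) - int (exc E U v)"

definition utilized :: "('a \<times> 'a) list \<Rightarrow> 'a \<Rightarrow> bool" where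
  "utilized \<sigma> w \<longleftrightarrow> (\<exists>(x, y) \<in> set \<sigma>. x = w \<or> y = w)"

text \<open>M(v): minimum over executable sequences from P+U putting at least two
pebbles on v of the number of cooperation vertices utilized (v counted if it
is a cooperation vertex); infinity (INF of the empty set) if no such sequence.\<close>
definition Mcoop :: "('a \<Rightarrow> 'a \<Rightarrow> bool) \<Rightarrow> ('a \<Rightarrow> nat) \<Rightarrow> ('a \<Rightarrow> nat) \<Rightarrow> 'a \<Rightarrow> enat" where
  "Mcoop E P U v = (INF \<sigma> \<in> {\<sigma>. executable E (dsum P U) \<sigma> \<and> apply_seq (dsum P U) \<sigma> v \<ge> 2}.
      enat (card {w. coop_vertex E P U w \<and> (utilized \<sigma> w \<or> w = v)}))"

end

theory Submission
  imports Defs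
begin

text \<open>Any sequence
putting two pebbles on v therefore contains a move w \<rightarrow> v from a neighbour w, and the
prefix before that move already puts two pebbles on w while utilizing no cooperation
vertex outside those counted for v. Hence M(w) \<le> M(v).\<close>

lemma executable_append:
  "executable E P (\<sigma> @ \<tau>) \<longleftrightarrow> executable E P \<sigma> \<and> executable E (apply_seq P \<sigma>) \<tau>"
  by (induction E P \<sigma> rule: executable.induct) auto

lemma apply_seq_le_if_no_move_into:
  assumes "\<forall>x. (x, v) \<notin> set \<sigma>"
  shows "apply_seq P \<sigma> v \<le> P v"
  using assms
proof (induction \<sigma> arbitrary: P)
  case Nil
  then show ?case by simp
next
  case (Cons m \<sigma>)
  obtain x y where m: "m = (x, y)" by force
  with Cons.prems have "y \<noteq> v" by auto
  then have "pmove P x y v \<le> P v" unfolding pmove_def by auto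
  moreover have "apply_seq (pmove P x y) \<sigma> v \<le> pmove P x y v"
    using Cons by auto
  ultimately show ?case using m by simp
qed

lemma reachable_neighbour:
  assumes "E v y" "v \<noteq> y" "X v \<ge> 2"
  shows "reachable E X y"
proof -
  have "executable E X [(v, y)]" "apply_seq X [(v, y)] y \<ge> 1"
    using assms by (simp_all add: pmove_def)
  then show ?thesis unfolding reachable_def k_reachable_def by blast
qed

lemma less_two_if_neighbour_coop_vertex:
  assumes "E v y" "v \<noteq> y" "coop_vertex E P U y" "\<forall>x. P x = 0 \<or> U x = 0"
  shows "dsum P U v < 2"
proof -
  have "P v < 2" "U v < 2"
    using assms(3) reachable_neighbour[of E v y P] reachable_neighbour[of E v y U] assms(1,2)
    unfolding coop_vertex_def by force+
  with assms(4) show ?thesis unfolding dsum_def by (metis add_0 add_0_right)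
qed

lemma split_at_move_into:
  assumes "executable E X \<sigma>" "apply_seq X \<sigma> v \<ge> 2" "X v < 2"
  obtains w \<sigma>\<^sub>1 \<sigma>\<^sub>2 where "\<sigma> = \<sigma>\<^sub>1 @ (w, v) # \<sigma>\<^sub>2" "E w v"
    "executable E X \<sigma>\<^sub>1" "apply_seq X \<sigma>\<^sub>1 w \<ge> 2"
proof -
  obtain w where "(w, v) \<in> set \<sigma>"
    using assms(2,3) apply_seq_le_if_no_move_into[of v \<sigma> X] by fastforce
  then obtain \<sigma>\<^sub>1 \<sigma>\<^sub>2 where "\<sigma> = \<sigma>\<^sub>1 @ (w, v) # \<sigma>\<^sub>2"
    by (metis split_list)
  with assms(1) show ?thesis
    using that by (auto simp: executable_append)
qed

lemma Mcoop_le_card: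
  assumes "executable E (dsum P U) \<sigma>" "apply_seq (dsum P U) \<sigma> v \<ge> 2"
  shows "Mcoop E P U v \<le> card {w. coop_vertex E P U w \<and> (utilized \<sigma> w \<or> w = v)}"
  unfolding Mcoop_def using assms by (auto intro: INF_lower)

lemma Mcoop_attained:
  assumes "Mcoop E P U v \<noteq> \<infinity>"
  obtains \<sigma> where "executable E (dsum P U) \<sigma>" "apply_seq (dsum P U) \<sigma> v \<ge> 2"
    "Mcoop E P U v = card {w. coop_vertex E P U w \<and> (utilized \<sigma> w \<or> w = v)}"
proof -
  let ?S = "{\<sigma>. executable E (dsum P U) \<sigma> \<and> apply_seq (dsum P U) \<sigma> v \<ge> 2}"
  let ?c = "\<lambda>\<sigma>. enat (card {w. coop_vertex E P U w \<and> (utilized \<sigma> w \<or> w = v)})"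
  have "?S \<noteq> {}"
  proof
    assume "?S = {}"
    then have "Mcoop E P U v = \<infinity>"
      unfolding Mcoop_def \<open>?S = {}\<close> by (simp add: top_enat_def)
    with assms show False ..
  qed
  then have "Inf (?c ` ?S) \<in> ?c ` ?S"
    by (blast intro: wellorder_InfI)
  then show ?thesis
    using that unfolding Mcoop_def by auto
qed

lemma finite_utilized: "finite {w. utilized \<sigma> w}"
proof (rule finite_subset)
  show "{w. utilized \<sigma> w} \<subseteq> fst ` set \<sigma> \<union> snd ` set \<sigma>"
    unfolding utilized_def by force
qed auto

lemma Mcoop_le_Mcoop_of_move_into:
  assumes "Mcoop E P U v = card {x. coop_vertex E P U x \<and> (utilized \<sigma> x \<or> x = v)}"
    and "\<sigma> = \<sigma>\<^sub>1 @ (w, v) # \<sigma>\<^sub>2"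
    and "executable E (dsum P U) \<sigma>\<^sub>1" "apply_seq (dsum P U) \<sigma>\<^sub>1 w \<ge> 2"
  shows "Mcoop E P U w \<le> Mcoop E P U v"
proof -
  have "{x. coop_vertex E P U x \<and> (utilized \<sigma> x \<or> x = v)} \<subseteq> insert v {x. utilized \<sigma> x}"
    by auto
  then have fin: "finite {x. coop_vertex E P U x \<and> (utilized \<sigma> x \<or> x = v)}"
    using finite_utilized finite_subset by blast
  have "{x. coop_vertex E P U x \<and> (utilized \<sigma>\<^sub>1 x \<or> x = w)}
      \<subseteq> {x. coop_vertex E P U x \<and> (utilized \<sigma> x \<or> x = v)}"
    using assms(2) unfolding utilized_def by auto
  then have "card {x. coop_vertex E P U x \<and> (utilized \<sigma>\<^sub>1 x \<or> x = w)}
      \<le> card {x. coop_vertex E P U x \<and> (utilized \<sigma> x \<or> x = v)}"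
    using fin by (rule card_mono[rotated])
  then show ?thesis
    using assms Mcoop_le_card[OF assms(3,4)] by (simp add: order_trans)
qed

theorem claim3p6:
  fixes V :: "'a set" and E :: "'a \<Rightarrow> 'a \<Rightarrow> bool"
    and P U :: "'a \<Rightarrow> nat" and u v :: 'a and k :: nat
  assumes "simple_graph V E"
    and "distribution V P"
    and "u \<in> V" and "k > 0" and "U = (\<lambda>x. if x = u then k else 0)"
    and "\<forall>x. P x = 0 \<or> U x = 0"
    and "coop_excess E P U v \<ge> 3"
    and "\<exists>y. E v y \<and> coop_vertex E P U y"
  shows "\<exists>w. E v w \<and> Mcoop E P U w \<le> Mcoop E P U v"
proof -
  obtain y where y: "E v y" "coop_vertex E P U y" using assms(8) by blast
  have sym: "\<And>x z. E x z \<Longrightarrow> E z x" and "v \<noteq> y"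
    using assms(1) y(1) unfolding simple_graph_def by auto
  show ?thesis
  proof (cases "Mcoop E P U v = \<infinity>")
    case True
    then show ?thesis using y(1) by auto
  next
    case False
    then obtain \<sigma> where \<sigma>: "executable E (dsum P U) \<sigma>" "apply_seq (dsum P U) \<sigma> v \<ge> 2"
      and Mv: "Mcoop E P U v = card {x. coop_vertex E P U x \<and> (utilized \<sigma> x \<or> x = v)}"
      by (rule Mcoop_attained)
    have "dsum P U v < 2"
      using less_two_if_neighbour_coop_vertex[OF y(1) \<open>v \<noteq> y\<close> y(2) assms(6)] .
    then obtain w \<sigma>\<^sub>1 \<sigma>\<^sub>2 where split: "\<sigma> = \<sigma>\<^sub>1 @ (w, v) # \<sigma>\<^sub>2" and "E w v"
      and prefix: "executable E (dsum P U) \<sigma>\<^sub>1" "apply_seq (dsum P U) \<sigma>\<^sub>1 w \<ge> 2"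
      by (rule split_at_move_into[OF \<sigma>])
    have "Mcoop E P U w \<le> Mcoop E P U v"
      using Mcoop_le_Mcoop_of_move_into[OF Mv split prefix] .
    with sym[OF \<open>E w v\<close>] show ?thesis by blast
  qed
qed

end
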